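(* Let $n\ge 2$, let $\mathcal I$ be the set of transpositions in the symmetric group $S_n$, and let $H$ be an abelian group. Then $S_n=\langle\mathcal I\rangle$ and for every $\tau_1,\tau_2\in\mathcal I$ there exists $t\in S_n$ with $t^2=\tau_1\tau_2$. Consequently $S_1(S_n,H)=S_{1,2}(S_n,H)\cong \mathrm{Hom}(S_n,H)$. Moreover, every $f\in S_1(S_n,H)$ is determined by a choice of $u\in H[2]$ and satisfies $f(\sigma)=0$ if $\sigma$ is even and $f(\sigma)=u$ if $\sigma$ is odd.
   Context: $H$ is written additively; $H[2]=\{h\in H:2h=0\}$. For a group $G$ with identity $e$, $S_1(G,H)$ is the set of $f:G\to H$ with $f(e)=0$ and $f(xy)+f(xy^{-1})=2f(x)$ for all $x,y\in G$; $S_{1,2}(G,H)$ is the subset of those also satisfying $f(xy)+f(x^{-1}y)=2f(y)$ for all $x,y\in G$. *)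

theory Defs
  imports "HOL-Algebra.Sym_Groups"
begin

text \<open>S_1(G,H): maps f : G -> H with f(e)=0 and f(xy)+f(xy^{-1}) = 2 f(x).
  Only the values on the carrier of G are constrained.\<close>
definition S1 :: "('g, 'm) monoid_scheme \<Rightarrow> ('g \<Rightarrow> 'h::ab_group_add) set" where
  "S1 G = {f. f \<one>\<^bsub>G\<^esub> = 0 \<and>
     (\<forall>x\<in>carrier G. \<forall>y\<in>carrier G.
        f (x \<otimes>\<^bsub>G\<^esub> y) + f (x \<otimes>\<^bsub>G\<^esub> inv\<^bsub>G\<^esub> y) = f x + f x)}"

definition S12 :: "('g, 'm) monoid_scheme \<Rightarrow> ('g \<Rightarrow> 'h::ab_group_add) set" where
  "S12 G = {f. f \<in> S1 G \<and>
     (\<forall>x\<in>carrier G. \<forall>y\<in>carrier G.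
        f (x \<otimes>\<^bsub>G\<^esub> y) + f (inv\<^bsub>G\<^esub> x \<otimes>\<^bsub>G\<^esub> y) = f y + f y)}"

definition Hom_to :: "('g, 'm) monoid_scheme \<Rightarrow> ('g \<Rightarrow> 'h::ab_group_add) set" where
  "Hom_to G = {f. \<forall>x\<in>carrier G. \<forall>y\<in>carrier G. f (x \<otimes>\<^bsub>G\<^esub> y) = f x + f y}"

definition transpositions :: "nat \<Rightarrow> (nat \<Rightarrow> nat) set" where
  "transpositions n = {transpose a b | a b. a \<in> {1..n} \<and> b \<in> {1..n} \<and> a \<noteq> b}"

end

theory Submission
  imports Defs
begin

(* For f in S1 and an involution t, the increment D(z) = f(zt) - f(z) satisfies 2 D = 0, and the
   identity f(yx) + f(y^-1 x) = 2 f(x), taken at x and at xt, gives D(yx) = D(y^-1 x); so D is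
   invariant under left multiplication by squares.  If G is generated by a set I of involutions
   whose pairwise products are squares, every word in I reduces modulo such products to 1 or t,
   whence D(z) = f(t), i.e. f(zt) = f(z) + f(t), and f is a homomorphism.  In S_n the product of
   two transpositions is the square of a 4-cycle when they are disjoint and of its own square
   otherwise.  A homomorphism into an abelian group is constant on the conjugacy class of
   transpositions, which yields the description by parity. *)

context group
begin

lemma S1_one: "f \<in> S1 G \<Longrightarrow> f \<one> = 0"
  unfolding S1_def by simp

lemma S1_mult_inv:
  "f \<in> S1 G \<Longrightarrow> x \<in> carrier G \<Longrightarrow> y \<in> carrier G \<Longrightarrow>
    f (x \<otimes> y) + f (x \<otimes> inv y) = f x + f x"
  unfolding S1_def by simp

lemma S1_inv:
  assumes "f \<in> S1 G" "y \<in> carrier G"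
  shows "f (inv y) = - f y"
  using S1_mult_inv[OF assms(1) one_closed assms(2)] S1_one[OF assms(1)] assms(2)
  by (simp add: add_eq_0_iff)

lemma S1_left_mult_inv:
  assumes f: "f \<in> S1 G" and x: "x \<in> carrier G" and y: "y \<in> carrier G"
  shows "f (y \<otimes> x) + f (inv y \<otimes> x) = f x + f x"
proof -
  have "f (inv x \<otimes> inv y) + f (inv x \<otimes> inv (inv y)) = f (inv x) + f (inv x)"
    using S1_mult_inv[OF f, of "inv x" "inv y"] x y by simp
  moreover have "inv x \<otimes> inv y = inv (y \<otimes> x)" "inv x \<otimes> inv (inv y) = inv (inv y \<otimes> x)"
    using x y by (simp_all add: inv_mult_group)
  ultimately have "- (f (y \<otimes> x) + f (inv y \<otimes> x)) = - (f x + f x)"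
    using S1_inv[OF f] x y by (simp add: algebra_simps)
  then show ?thesis
    by (simp only: neg_equal_iff_equal)
qed

lemma S1_eq_S12: "S1 G = S12 G"
  unfolding S12_def using S1_left_mult_inv by auto

lemma S1_increment_left_inv:
  assumes f: "f \<in> S1 G" and t: "t \<in> carrier G" "t \<otimes> t = \<one>"
    and x: "x \<in> carrier G" and y: "y \<in> carrier G"
  shows "f (y \<otimes> x \<otimes> t) - f (y \<otimes> x) = f (inv y \<otimes> x \<otimes> t) - f (inv y \<otimes> x)"
proof -
  have double: "f (z \<otimes> t) + f (z \<otimes> t) = f z + f z" if "z \<in> carrier G" for z
    using S1_mult_inv[OF f that t(1)] inv_equality[OF t(2) t(1) t(1)] by simp
  define d where "d = f (inv y \<otimes> x \<otimes> t) - f (inv y \<otimes> x)"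
  have "d + d = 0"
    using double[of "inv y \<otimes> x"] x y unfolding d_def by (simp add: algebra_simps)
  have "f (y \<otimes> x \<otimes> t) + f (inv y \<otimes> x \<otimes> t) = f (x \<otimes> t) + f (x \<otimes> t)"
    using S1_left_mult_inv[OF f, of "x \<otimes> t" y] x y t by (simp add: m_assoc)
  moreover have "f (y \<otimes> x) + f (inv y \<otimes> x) = f x + f x"
    using S1_left_mult_inv[OF f x y] .
  ultimately have "f (y \<otimes> x \<otimes> t) - f (y \<otimes> x) = - d"
    using double[OF x] unfolding d_def by (simp add: algebra_simps)
  with \<open>d + d = 0\<close> show ?thesis
    unfolding d_def by (simp add: add_eq_0_iff)
qed

lemma S1_increment_square_invariant:
  assumes f: "f \<in> S1 G" and t: "t \<in> carrier G" "t \<otimes> t = \<one>"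
    and s: "s \<in> carrier G" and w: "w \<in> carrier G"
  shows "f (s \<otimes> s \<otimes> w \<otimes> t) - f (s \<otimes> s \<otimes> w) = f (w \<otimes> t) - f w"
  using S1_increment_left_inv[OF f t, of "s \<otimes> w" s] s w
  by (simp add: m_assoc[symmetric])

lemma Hom_toD:
  "f \<in> Hom_to G \<Longrightarrow> x \<in> carrier G \<Longrightarrow> y \<in> carrier G \<Longrightarrow> f (x \<otimes> y) = f x + f y"
  unfolding Hom_to_def by simp

lemma Hom_to_one: "f \<in> Hom_to G \<Longrightarrow> f \<one> = 0"
  using Hom_toD[of f \<one> \<one>] by simp

lemma Hom_to_inv: "f \<in> Hom_to G \<Longrightarrow> y \<in> carrier G \<Longrightarrow> f (inv y) = - f y"
  using Hom_toD[of f "inv y" y] Hom_to_one[of f] by (simp add: add_eq_0_iff)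

lemma Hom_to_involution: "f \<in> Hom_to G \<Longrightarrow> t \<in> carrier G \<Longrightarrow> t \<otimes> t = \<one> \<Longrightarrow> f t + f t = 0"
  using Hom_toD[of f t t] Hom_to_one[of f] by simp

lemma Hom_to_conj:
  "f \<in> Hom_to G \<Longrightarrow> g \<in> carrier G \<Longrightarrow> x \<in> carrier G \<Longrightarrow> f (g \<otimes> x \<otimes> inv g) = f x"
  by (simp add: Hom_toD Hom_to_inv)

lemma Hom_to_subset_S1: "Hom_to G \<subseteq> S1 G"
  unfolding S1_def by (auto simp: Hom_toD Hom_to_one Hom_to_inv)

lemma generate_induct_left [consumes 2, case_names one gen inv_gen]:
  assumes "I \<subseteq> carrier G" "x \<in> generate G I"
    and "P \<one>"
    and "\<And>h q. h \<in> I \<Longrightarrow> q \<in> generate G I \<Longrightarrow> P q \<Longrightarrow> P (h \<otimes> q)"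
    and "\<And>h q. h \<in> I \<Longrightarrow> q \<in> generate G I \<Longrightarrow> P q \<Longrightarrow> P (inv h \<otimes> q)"
  shows "P x"
proof -
  have "\<And>q. q \<in> generate G I \<Longrightarrow> P q \<Longrightarrow> P (x \<otimes> q)"
    using assms(2)
  proof (induction rule: generate.induct)
    case one
    then show ?case using generate_in_carrier[OF assms(1)] by simp
  next
    case (eng h1 h2)
    have "h1 \<otimes> h2 \<otimes> q = h1 \<otimes> (h2 \<otimes> q)"
      using eng.hyps eng.prems generate_in_carrier[OF assms(1)] by (simp add: m_assoc)
    then show ?case using eng generate.eng by metis
  qed (use assms in auto)
  from this[OF generate.one assms(3)] show ?thesis
    using generate_in_carrier[OF assms(1,2)] by simp
qed

end

locale involution_generated_group = group G for G (structure) +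
  fixes I
  assumes generated: "generate G I = carrier G"
    and involution: "\<tau> \<in> I \<Longrightarrow> \<tau> \<otimes> \<tau> = \<one>"
    and product_square: "\<tau>1 \<in> I \<Longrightarrow> \<tau>2 \<in> I \<Longrightarrow> \<exists>s\<in>carrier G. s \<otimes> s = \<tau>1 \<otimes> \<tau>2"
begin

lemma generators_closed: "I \<subseteq> carrier G"
  using generate.incl[of _ I G] generated by blast

lemma generator_inv: "\<tau> \<in> I \<Longrightarrow> inv \<tau> = \<tau>"
  using inv_equality involution generators_closed by blast

lemma generator_induct [consumes 1, case_names one gen]:
  assumes "x \<in> carrier G" "P \<one>"
    and "\<And>h q. h \<in> I \<Longrightarrow> q \<in> carrier G \<Longrightarrow> P q \<Longrightarrow> P (h \<otimes> q)"
  shows "P x"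
  using generators_closed assms(1)[folded generated]
  by (induction rule: generate_induct_left) (use assms generator_inv generated in auto)

lemma S1_mult_generator:
  assumes f: "f \<in> S1 G" and t: "t \<in> I" and q: "q \<in> carrier G"
  shows "f (q \<otimes> t) = f q + f t"
proof -
  define D where "D z = f (z \<otimes> t) - f z" for z
  have t_carrier: "t \<in> carrier G" and tt: "t \<otimes> t = \<one>"
    using t generators_closed involution by auto
  have D_product: "D (\<tau>1 \<otimes> \<tau>2 \<otimes> w) = D w"
    if \<tau>: "\<tau>1 \<in> I" "\<tau>2 \<in> I" and w: "w \<in> carrier G" for \<tau>1 \<tau>2 w
  proof -
    obtain s where "s \<in> carrier G" "s \<otimes> s = \<tau>1 \<otimes> \<tau>2"
      using product_square[OF \<tau>] by blast
    then show ?thesis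
      using S1_increment_square_invariant[OF f t_carrier tt _ w] unfolding D_def by metis
  qed
  have D_one: "D \<one> = f t"
    unfolding D_def using S1_one[OF f] t_carrier by simp
  have D_t: "D t = f t"
    unfolding D_def using S1_one[OF f] S1_inv[OF f t_carrier] generator_inv[OF t] tt by simp
  \<comment> \<open>Modulo products of two generators, a word in \<open>I\<close> reduces to \<open>\<one>\<close> or \<open>t\<close>.\<close>
  have "D q = f t \<and> D (t \<otimes> q) = f t"
    using q
  proof (induction rule: generator_induct)
    case one
    then show ?case using D_one D_t t_carrier by simp
  next
    case (gen h q)
    have h: "h \<in> carrier G" using gen.hyps generators_closed by auto
    have "h \<otimes> t \<otimes> (t \<otimes> q) = h \<otimes> ((t \<otimes> t) \<otimes> q)"
      using h gen.hyps t_carrier by (simp add: m_assoc)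
    then have "h \<otimes> q = h \<otimes> t \<otimes> (t \<otimes> q)"
      using gen.hyps tt by simp
    then have "D (h \<otimes> q) = D (t \<otimes> q)"
      using D_product[OF gen.hyps(1) t] gen.hyps t_carrier by auto
    moreover have "D (t \<otimes> (h \<otimes> q)) = D q"
      using D_product[OF t gen.hyps(1,2)] h gen.hyps t_carrier by (simp add: m_assoc)
    ultimately show ?case using gen.IH by simp
  qed
  then show ?thesis
    unfolding D_def by (simp add: algebra_simps)
qed

lemma S1_subset_Hom_to: "S1 G \<subseteq> Hom_to G"
proof
  fix f assume f: "f \<in> S1 G"
  have "\<forall>q\<in>carrier G. f (q \<otimes> p) = f q + f p" if "p \<in> carrier G" for p
    using that
  proof (induction rule: generator_induct)
    case one
    then show ?case using S1_one[OF f] by simp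
  next
    case (gen h p)
    have h: "h \<in> carrier G" using gen.hyps generators_closed by auto
    show ?case
    proof
      fix q assume q: "q \<in> carrier G"
      have "f (q \<otimes> (h \<otimes> p)) = f (q \<otimes> h \<otimes> p)" using q h gen.hyps by (simp add: m_assoc)
      also have "\<dots> = f q + f h + f p"
        using gen.IH S1_mult_generator[OF f gen.hyps(1) q] q h by simp
      also have "\<dots> = f q + f (h \<otimes> p)"
        using gen.IH h by (simp add: add.assoc)
      finally show "f (q \<otimes> (h \<otimes> p)) = f q + f (h \<otimes> p)" .
    qed
  qed
  then show "f \<in> Hom_to G"
    unfolding Hom_to_def by blast
qed

lemma S1_eq_Hom_to: "S1 G = Hom_to G"
  using S1_subset_Hom_to Hom_to_subset_S1 by blast

end

lemma transposition_in_sym_group: "\<tau> \<in> transpositions n \<Longrightarrow> \<tau> \<in> carrier (sym_group n)"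
  unfolding transpositions_def sym_group_carrier by (auto intro: permutes_swap_id)

lemma transposition_involutive: "\<tau> \<in> transpositions n \<Longrightarrow> \<tau> \<circ> \<tau> = id"
  unfolding transpositions_def by auto

lemma generate_transpositions:
  "generate (sym_group n) (transpositions n) = carrier (sym_group n)"
proof
  interpret group "sym_group n" by (rule sym_group_is_group)
  show "generate (sym_group n) (transpositions n) \<subseteq> carrier (sym_group n)"
    by (rule generate_incl) (auto dest: transposition_in_sym_group)
  show "carrier (sym_group n) \<subseteq> generate (sym_group n) (transpositions n)"
  proof
    fix p assume "p \<in> carrier (sym_group n)"
    then have "p permutes {1..n}" by (simp add: sym_group_carrier)
    then show "p \<in> generate (sym_group n) (transpositions n)"
      using finite_atLeastAtMost[of 1 n]
    proof (induction rule: permutes_induct)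
      case id
      then show ?case using generate.one[of "sym_group n"] by (simp add: sym_group_one id_def)
    next
      case (swap a b p)
      then have "transpose a b \<in> generate (sym_group n) (transpositions n)"
        by (intro generate.incl) (auto simp: transpositions_def)
      from generate.eng[OF this swap.IH] show ?case by (simp only: sym_group_mult)
    qed
  qed
qed

\<comment> \<open>the 4-cycle \<open>a \<mapsto> c \<mapsto> b \<mapsto> d \<mapsto> a\<close> squares to \<open>(a b)(c d)\<close>\<close>
lemma disjoint_transpositions_square:
  assumes "a \<noteq> b" "c \<noteq> d" "a \<noteq> c" "a \<noteq> d" "b \<noteq> c" "b \<noteq> d"
  shows "(transpose a c \<circ> transpose c b \<circ> transpose b d) \<circ>
      (transpose a c \<circ> transpose c b \<circ> transpose b d) = transpose a b \<circ> transpose c d"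
  using assms by (auto simp: fun_eq_iff transpose_def)

lemma overlapping_transpositions_cube:
  assumes "a \<noteq> b" "c \<noteq> d" "a = c \<or> a = d \<or> b = c \<or> b = d"
  shows "(transpose a b \<circ> transpose c d) \<circ> (transpose a b \<circ> transpose c d) \<circ>
      (transpose a b \<circ> transpose c d) = id"
  using assms by (auto simp: fun_eq_iff transpose_def)

lemma transposition_product_square:
  assumes "\<tau>1 \<in> transpositions n" "\<tau>2 \<in> transpositions n"
  shows "\<exists>t\<in>carrier (sym_group n). t \<circ> t = \<tau>1 \<circ> \<tau>2"
proof -
  obtain a b where ab: "\<tau>1 = transpose a b" "a \<in> {1..n}" "b \<in> {1..n}" "a \<noteq> b"
    using assms(1) unfolding transpositions_def by auto
  obtain c d where cd: "\<tau>2 = transpose c d" "c \<in> {1..n}" "d \<in> {1..n}" "c \<noteq> d"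
    using assms(2) unfolding transpositions_def by auto
  show ?thesis
  proof (cases "a = c \<or> a = d \<or> b = c \<or> b = d")
    case False
    let ?t = "transpose a c \<circ> transpose c b \<circ> transpose b d"
    have "?t \<in> carrier (sym_group n)" unfolding sym_group_carrier
      using ab cd by (intro permutes_compose permutes_swap_id) auto
    moreover have "?t \<circ> ?t = \<tau>1 \<circ> \<tau>2"
      using disjoint_transpositions_square[of a b c d] False ab cd by simp
    ultimately show ?thesis by blast
  next
    case True
    \<comment> \<open>\<open>\<tau>1 \<circ> \<tau>2\<close> has order 1 or 3, so it is the square of its own square\<close>
    let ?p = "\<tau>1 \<circ> \<tau>2"
    have "?p \<in> carrier (sym_group n)"
      using assms[THEN transposition_in_sym_group] by (simp add: sym_group_carrier permutes_compose)
    then have "?p \<circ> ?p \<in> carrier (sym_group n)"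
      by (simp add: sym_group_carrier permutes_compose)
    moreover have "(?p \<circ> ?p) \<circ> (?p \<circ> ?p) = (?p \<circ> ?p \<circ> ?p) \<circ> ?p"
      by (simp add: o_assoc)
    then have "(?p \<circ> ?p) \<circ> (?p \<circ> ?p) = ?p"
      using overlapping_transpositions_cube[of a b c d] True ab cd by simp
    ultimately show ?thesis by blast
  qed
qed

lemma involution_generated_group_sym_group:
  "involution_generated_group (sym_group n) (transpositions n)"
proof -
  interpret group "sym_group n" by (rule sym_group_is_group)
  show ?thesis
    by unfold_locales
      (auto simp: generate_transpositions sym_group_mult sym_group_one
        transposition_involutive transposition_product_square)
qed

lemma Hom_to_sym_group_transpose_eq:
  assumes f: "f \<in> Hom_to (sym_group n)"
    and abc: "a \<in> {1..n}" "b \<in> {1..n}" "c \<in> {1..n}" "a \<noteq> c" "b \<noteq> c"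
  shows "f (transpose a c) = f (transpose b c)"
proof -
  interpret group "sym_group n" by (rule sym_group_is_group)
  have carrier: "transpose x y \<in> carrier (sym_group n)" if "x \<in> {1..n}" "y \<in> {1..n}" for x y
    using that by (simp add: sym_group_carrier permutes_swap_id)
  have "transpose a c = transpose a b \<circ> transpose b c \<circ> inv' (transpose a b)"
    using abc by (simp add: transpose_comp_triple)
  then have "f (transpose a c) = f (transpose a b \<otimes>\<^bsub>sym_group n\<^esub> transpose b c
      \<otimes>\<^bsub>sym_group n\<^esub> inv\<^bsub>sym_group n\<^esub> transpose a b)"
    using carrier abc by (simp add: sym_group_mult)
  also have "\<dots> = f (transpose b c)"
    using Hom_to_conj[OF f carrier[of a b] carrier[of b c]] abc by simp
  finally show ?thesis .
qed

lemma Hom_to_sym_group_transpose: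
  assumes f: "f \<in> Hom_to (sym_group n)" and n: "n \<ge> 2"
    and cd: "c \<in> {1..n}" "d \<in> {1..n}" "c \<noteq> d"
  shows "f (transpose c d) = f (transpose 1 2)"
proof -
  have 12: "1 \<in> {1..n}" "2 \<in> {1..n}" using n by auto
  note eq = Hom_to_sym_group_transpose_eq[OF f]
  show ?thesis
  proof (cases "d = 1")
    case True
    then show ?thesis
      using eq[of c 2 1] 12 cd by (simp add: transpose_commute)
  next
    case False
    then have "f (transpose c d) = f (transpose 1 d)" using eq 12 cd by blast
    also have "\<dots> = f (transpose 2 1)"
      using eq[of d 2 1] 12 cd False by (simp add: transpose_commute)
    finally show ?thesis by (simp add: transpose_commute)
  qed
qed

lemma Hom_to_sym_group_evenperm:
  assumes f: "f \<in> Hom_to (sym_group n)" and n: "n \<ge> 2"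
  shows "\<exists>u. u + u = 0 \<and> (\<forall>p\<in>carrier (sym_group n). f p = (if evenperm p then 0 else u))"
proof (intro exI conjI ballI)
  interpret group "sym_group n" by (rule sym_group_is_group)
  let ?u = "f (transpose 1 2)"
  have "transpose 1 2 \<in> transpositions n"
    using n unfolding transpositions_def by force
  then show uu: "?u + ?u = 0"
    using Hom_to_involution[OF f] transposition_in_sym_group transposition_involutive
    by (metis sym_group_mult sym_group_one)
  fix p assume "p \<in> carrier (sym_group n)"
  then have "p permutes {1..n}" by (simp add: sym_group_carrier)
  then show "f p = (if evenperm p then 0 else ?u)"
    using finite_atLeastAtMost[of 1 n]
  proof (induction rule: permutes_induct)
    case id
    then show ?case using Hom_to_one[OF f] by (simp add: sym_group_one id_def)
  next
    case (swap a b p)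
    have p: "p \<in> carrier (sym_group n)" and ab: "transpose a b \<in> carrier (sym_group n)"
      using swap.hyps by (simp_all add: sym_group_carrier permutes_swap_id)
    have f_swap: "f (transpose a b \<circ> p) = ?u + f p"
      using Hom_toD[OF f ab p] Hom_to_sym_group_transpose[OF f n swap.hyps(1-3)]
      by (simp add: sym_group_mult)
    have parity_flip: "evenperm (transpose a b \<circ> p) \<longleftrightarrow> \<not> evenperm p"
      using evenperm_comp[OF permutation_swap_id sym_group_carrier'[OF p], of a b] swap.hyps(3)
      by (simp add: evenperm_swap)
    show ?case
      unfolding f_swap parity_flip swap.IH using uu by simp
  qed
qed

lemma evenperm_indicator_in_Hom_to:
  "u + u = 0 \<Longrightarrow> (\<lambda>\<sigma>. if evenperm \<sigma> then 0 else u) \<in> Hom_to (sym_group n)"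
  unfolding Hom_to_def by (auto simp: sym_group_mult evenperm_comp sym_group_carrier')

theorem mainTheorem7:
  fixes n :: nat
  assumes "n \<ge> 2"
  shows "(generate (sym_group n) (transpositions n) = carrier (sym_group n)) \<and>
    (\<forall>\<tau>1\<in>transpositions n. \<forall>\<tau>2\<in>transpositions n.
           \<exists>t\<in>carrier (sym_group n).
             t \<otimes>\<^bsub>sym_group n\<^esub> t = \<tau>1 \<otimes>\<^bsub>sym_group n\<^esub> \<tau>2) \<and>
    ((S1 (sym_group n) :: ((nat \<Rightarrow> nat) \<Rightarrow> 'h::ab_group_add) set) = S12 (sym_group n)) \<and>
    ((S12 (sym_group n) :: ((nat \<Rightarrow> nat) \<Rightarrow> 'h) set) = Hom_to (sym_group n)) \<and>
    (\<forall>f \<in> (S1 (sym_group n) :: ((nat \<Rightarrow> nat) \<Rightarrow> 'h) set).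
           \<exists>u::'h. u + u = 0 \<and>
             (\<forall>\<sigma>\<in>carrier (sym_group n). f \<sigma> = (if evenperm \<sigma> then 0 else u))) \<and>
    (\<forall>u::'h. u + u = 0 \<longrightarrow>
           (\<lambda>\<sigma>. if evenperm \<sigma> then 0 else u) \<in> S1 (sym_group n))"
proof -
  interpret involution_generated_group "sym_group n" "transpositions n"
    by (rule involution_generated_group_sym_group)
  have S1_Hom: "(S1 (sym_group n) :: ((nat \<Rightarrow> nat) \<Rightarrow> 'h) set) = Hom_to (sym_group n)"
    by (rule S1_eq_Hom_to)
  have S12_Hom: "(S12 (sym_group n) :: ((nat \<Rightarrow> nat) \<Rightarrow> 'h) set) = Hom_to (sym_group n)"
    using S1_Hom by (simp add: S1_eq_S12)
  show ?thesis
    unfolding S1_Hom S12_Hom sym_group_mult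
    using generate_transpositions transposition_product_square
      Hom_to_sym_group_evenperm[OF _ assms] evenperm_indicator_in_Hom_to
    by blast
qed

end
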